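(* Assume the standing setting and $\int_{\mathcal F}\|f\|^2\,\mathrm d\nu(f)<\infty$. Let $\{\bar u^\theta_{t\to r}\}$ be a parametric family of maps $\mathcal F\to\mathcal F$ indexed by $\theta$ and $0<t<r<1$, and let $(t,r)$ be random with a fixed distribution on $\{(t,r):0<t<r<1\}$, independent of $f\sim\nu$. Define $$\mathcal L^M(\theta)=\mathbb E_{t,r}\,\mathbb E_{g\sim\mu_t}\big[\|\bar u_{t\to r}(g)-\bar u^\theta_{t\to r}(g)\|^2\big],$$ $$\mathcal L^M_c(\theta)=\mathbb E_{t,r}\,\mathbb E_{f\sim\nu}\,\mathbb E_{g\sim\mu_t^f}\Big[\big\|(r-t)\big(\tfrac{\partial}{\partial t}\bar u_{t\to r}(g)+D\bar u_{t\to r}(g)[u_t^f(g)]\big)+u_t^f(g)-\bar u^\theta_{t\to r}(g)\big\|^2\Big],$$ and assume all quantities appearing inside the norms are square integrable with respect to the respective measures. Then $\mathcal L^M_c(\theta)=\mathcal L^M(\theta)+C$, where $C\in\mathbb R$ does not depend on $\theta$.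
   Context: Standing setting: $(\mathcal F,\langle\cdot,\cdot\rangle)$ is a real separable Hilbert space with norm $\|\cdot\|$; $D$ is the Fréchet derivative in the function argument. $C_0$ is a self-adjoint, positive, trace-class covariance operator on $\mathcal F$ and $\mu_0=\mathcal N(0,C_0)$. $\nu$ is a Borel probability measure on $\mathcal F$. Fix $\sigma_{\min}\in(0,1)$, $\sigma_t=1-(1-\sigma_{\min})t$. For $f\in\mathcal F$: $\mu_t^f=\mathcal N(tf,\sigma_t^2C_0)$, $\phi_t^f(g)=\sigma_t g+tf$, $u_t^f(g)=\frac{1-\sigma_{\min}}{1-(1-\sigma_{\min})t}(tf-g)+f$. Marginal measure $\mu_t(A)=\int_{\mathcal F}\mu_t^f(A)\,\mathrm d\nu(f)$; assume $\mu_t^f\ll\mu_t$ for $\nu$-a.e. $f$, a.e. $t$; $\rho_t^f=\frac{\mathrm d\mu_t^f}{\mathrm d\mu_t}$. Marginal velocity $u_t(g)=\int_{\mathcal F}u_t^f(g)\rho_t^f(g)\,\mathrm d\nu(f)$. Marginal flow $\phi_t$ solves $\partial_t\phi_t(g)=u_t(\phi_t(g))$, $\phi_0=\mathrm{Id}_{\mathcal F}$, assumed well defined and invertible; two-parameter flow $\phi_{t\to r}=\phi_r\circ\phi_t^{-1}$. Mean velocity: $\bar u_{t\to r}=\frac{1}{r-t}(\phi_{t\to r}-\mathrm{Id}_{\mathcal F})$ for $t\ne r$. *)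

theory Defs
  imports "HOL-Probability.Probability"
begin

definition orthonormal_basis :: "'a::real_inner set \<Rightarrow> bool" where
  "orthonormal_basis B \<longleftrightarrow>
     (\<forall>b\<in>B. norm b = 1) \<and> (\<forall>b\<in>B. \<forall>c\<in>B. b \<noteq> c \<longrightarrow> b \<bullet> c = 0) \<and>
     closure (span B) = UNIV"

text \<open>For a positive self-adjoint operator, trace class means that the trace
  sum of (C e) inner e over an orthonormal basis is finite.\<close>
definition covariance_operator :: "('a::{real_inner,complete_space} \<Rightarrow> 'a) \<Rightarrow> bool" where
  "covariance_operator C \<longleftrightarrow>
     bounded_linear C \<and>
     (\<forall>x y. C x \<bullet> y = x \<bullet> C y) \<and>
     (\<forall>x. 0 \<le> C x \<bullet> x) \<and>
     (\<exists>B. orthonormal_basis B \<and> (\<lambda>b. C b \<bullet> b) summable_on B)"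

definition normal_law :: "real \<Rightarrow> real \<Rightarrow> real measure" where
  "normal_law m v = (if v = 0 then return borel m else density lborel (normal_density m (sqrt v)))"

definition gaussian_measure :: "'a::{real_inner,polish_space} measure \<Rightarrow> 'a \<Rightarrow> ('a \<Rightarrow> 'a) \<Rightarrow> bool" where
  "gaussian_measure M m C \<longleftrightarrow>
     prob_space M \<and> sets M = sets borel \<and>
     (\<forall>h. distr M borel (\<lambda>x. x \<bullet> h) = normal_law (m \<bullet> h) (C h \<bullet> h))"

definition sigma_t :: "real \<Rightarrow> real \<Rightarrow> real" where
  "sigma_t smin t = 1 - (1 - smin) * t"

definition cond_velocity :: "real \<Rightarrow> real \<Rightarrow> 'a::real_vector \<Rightarrow> 'a \<Rightarrow> 'a" where
  "cond_velocity smin t f g =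
     ((1 - smin) / (1 - (1 - smin) * t)) *\<^sub>R (t *\<^sub>R f - g) + f"

definition marginal_velocity ::
  "'a::{real_inner,polish_space} measure \<Rightarrow> (real \<Rightarrow> 'a \<Rightarrow> 'a \<Rightarrow> real) \<Rightarrow> real \<Rightarrow> real \<Rightarrow> 'a \<Rightarrow> 'a" where
  "marginal_velocity \<nu> rho smin t g = (\<integral>f. rho t f g *\<^sub>R cond_velocity smin t f g \<partial>\<nu>)"

definition mean_velocity :: "(real \<Rightarrow> 'a::real_vector \<Rightarrow> 'a) \<Rightarrow> real \<Rightarrow> real \<Rightarrow> 'a \<Rightarrow> 'a" where
  "mean_velocity phi t r g = (1 / (r - t)) *\<^sub>R (phi r (inv (phi t) g) - g)"

end

theory Submission
  imports Defs
begin

text \<open>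
  Fix \<open>0 < t < r < 1\<close> and write \<open>X(f, g)\<close> for the conditional target
  \<open>(r - t) (\<partial>\<^sub>t ubar(g) + D ubar(g)[u\<^sub>t\<^sup>f(g)]) + u\<^sub>t\<^sup>f(g)\<close>. It is affine in \<open>u\<^sub>t\<^sup>f(g)\<close>, so its
  \<open>\<rho>\<^sub>t\<^sup>f(g)\<close>-weighted average over \<open>f \<sim> \<nu>\<close> is \<open>(r - t) (\<partial>\<^sub>t ubar + D ubar[u\<^sub>t]) + u\<^sub>t\<close>, and this
  equals \<open>ubar\<^sub>t\<^sub>\<rightarrow>\<^sub>r(g)\<close>: differentiate \<open>(r - s) ubar\<^sub>s\<^sub>\<rightarrow>\<^sub>r(\<phi>\<^sub>s x) = \<phi>\<^sub>r x - \<phi>\<^sub>s x\<close> at \<open>s = t\<close>.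
  Thus \<open>ubar\<^sub>t\<^sub>\<rightarrow>\<^sub>r(g)\<close> is the conditional mean of \<open>X\<close> given \<open>g\<close> under the joint law
  \<open>\<nu>(df) \<mu>\<^sub>t\<^sup>f(dg)\<close>, whose \<open>g\<close>-marginal is \<open>\<mu>\<^sub>t\<close>, and the bias-variance decomposition gives,
  for every square-integrable \<open>V\<close>,
  \<open>E \<parallel>X - V(g)\<parallel>\<^sup>2 = E\<^sub>\<mu>\<^sub>t \<parallel>ubar - V\<parallel>\<^sup>2 + (E \<parallel>X\<parallel>\<^sup>2 - E\<^sub>\<mu>\<^sub>t \<parallel>ubar\<parallel>\<^sup>2)\<close>.
  The bracket does not involve \<open>V = ubar\<^sup>\<theta>\<^sub>t\<^sub>\<rightarrow>\<^sub>r\<close>; integrating over \<open>(t, r)\<close> gives the theorem.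
\<close>

section \<open>Bochner integrability in complete normed spaces\<close>

text \<open>The library proves \<open>integrableI_bounded\<close> only for types of class \<open>banach\<close>, and a type
  variable of sort \<open>{real_normed_vector, complete_space}\<close> is not of that class. An isometric copy
  of such a type is an instance of \<open>banach\<close>, and integrability transfers back along the isometry.\<close>

typedef 'a banach_copy = "UNIV :: 'a set" ..

lemma banach_copy_eq_Abs_iff: "x = Abs_banach_copy y \<longleftrightarrow> Rep_banach_copy x = y"
  by (metis Abs_banach_copy_inverse Rep_banach_copy_inverse UNIV_I)

lemmas banach_copy_simps [simp] = Abs_banach_copy_inverse[OF UNIV_I] Rep_banach_copy_inverse
  Rep_banach_copy_inject banach_copy_eq_Abs_iff

instantiation banach_copy :: (real_normed_vector) real_normed_vector
begin
definition "0 = Abs_banach_copy 0"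
definition "x + y = Abs_banach_copy (Rep_banach_copy x + Rep_banach_copy y)"
definition "x - y = Abs_banach_copy (Rep_banach_copy x - Rep_banach_copy y)"
definition "- x = Abs_banach_copy (- Rep_banach_copy x)"
definition "a *\<^sub>R x = Abs_banach_copy (a *\<^sub>R Rep_banach_copy x)"
definition "norm x = norm (Rep_banach_copy x)"
definition "sgn x = Abs_banach_copy (sgn (Rep_banach_copy x))"
definition "dist x y = dist (Rep_banach_copy x) (Rep_banach_copy y)"
definition "uniformity = (INF e\<in>{0<..}. principal {(x, y::'a banach_copy). dist x y < e})"
definition "open U = (\<forall>x\<in>U. \<forall>\<^sub>F (x', y) in uniformity. x' = x \<longrightarrow> y \<in> (U::'a banach_copy set))"
instance
  by standard (auto simp: zero_banach_copy_def plus_banach_copy_def minus_banach_copy_def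
      uminus_banach_copy_def scaleR_banach_copy_def norm_banach_copy_def sgn_banach_copy_def
      dist_banach_copy_def uniformity_banach_copy_def open_banach_copy_def
      algebra_simps norm_triangle_ineq dist_norm sgn_div_norm)
end

lemma bounded_linear_Abs_banach_copy: "bounded_linear Abs_banach_copy"
  by (rule bounded_linear_intro[where K=1])
    (auto simp: plus_banach_copy_def scaleR_banach_copy_def norm_banach_copy_def)

lemma bounded_linear_Rep_banach_copy: "bounded_linear Rep_banach_copy"
  by (rule bounded_linear_intro[where K=1])
    (auto simp: plus_banach_copy_def scaleR_banach_copy_def norm_banach_copy_def)

lemma open_banach_copy_iff: "open U \<longleftrightarrow> open (Abs_banach_copy -` U)"
proof -
  have "continuous_on UNIV Abs_banach_copy" "continuous_on UNIV Rep_banach_copy"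
    by (intro linear_continuous_on bounded_linear_Abs_banach_copy bounded_linear_Rep_banach_copy)+
  then show ?thesis
    using open_vimage[of U Abs_banach_copy] open_vimage[of "Abs_banach_copy -` U" Rep_banach_copy]
    by (auto simp: vimage_def)
qed

instance banach_copy :: ("{real_normed_vector, complete_space}") banach
proof
  fix X :: "nat \<Rightarrow> 'a banach_copy"
  assume "Cauchy X"
  then have "Cauchy (\<lambda>n. Rep_banach_copy (X n))"
    by (simp add: Cauchy_def dist_banach_copy_def)
  then obtain l where "(\<lambda>n. Rep_banach_copy (X n)) \<longlonglongrightarrow> l"
    by (auto simp: convergent_def dest!: Cauchy_convergent)
  then have "X \<longlonglongrightarrow> Abs_banach_copy l"
    by (simp add: lim_sequentially dist_banach_copy_def)
  then show "convergent X" by (auto simp: convergent_def)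
qed

instance banach_copy :: ("{real_normed_vector, second_countable_topology}") second_countable_topology
proof
  obtain B :: "'a set set" where "countable B" "topological_basis B"
    using ex_countable_basis by blast
  have "topological_basis ((\<lambda>b. Rep_banach_copy -` b) ` B)"
    unfolding topological_basis_def
  proof safe
    fix b assume "b \<in> B"
    then show "open (Rep_banach_copy -` b)"
      using \<open>topological_basis B\<close> by (simp add: open_banach_copy_iff vimage_def topological_basis_open)
  next
    fix U :: "'a banach_copy set" assume "open U"
    then obtain B' where "B' \<subseteq> B" and B': "\<Union>B' = Abs_banach_copy -` U"
      using \<open>topological_basis B\<close> by (auto simp: open_banach_copy_iff topological_basis_def)
    have "x \<in> U \<longleftrightarrow> Rep_banach_copy x \<in> \<Union>B'" for x
      unfolding B' by simp
    then show "\<exists>B''\<subseteq>(\<lambda>b. Rep_banach_copy -` b) ` B. \<Union>B'' = U"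
      using \<open>B' \<subseteq> B\<close> by (intro exI[of _ "(\<lambda>b. Rep_banach_copy -` b) ` B'"]) auto
  qed
  then show "\<exists>B::'a banach_copy set set. countable B \<and> open = generate_topology B"
    using \<open>countable B\<close> topological_basis_imp_subbasis
    by (intro exI[of _ "(\<lambda>b. Rep_banach_copy -` b) ` B"]) auto
qed

lemma integrableI_bounded_complete:
  fixes f :: "'a \<Rightarrow> 'b::{real_normed_vector, complete_space, second_countable_topology}"
  assumes "f \<in> borel_measurable M" and "(\<integral>\<^sup>+x. norm (f x) \<partial>M) < \<infinity>"
  shows "integrable M f"
proof -
  have "Abs_banach_copy \<in> borel_measurable borel"
    by (intro borel_measurable_continuous_onI linear_continuous_on bounded_linear_Abs_banach_copy)
  then have "integrable M (\<lambda>x. Abs_banach_copy (f x))"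
    using assms by (intro integrableI_bounded measurable_compose[OF assms(1)])
      (auto simp: norm_banach_copy_def)
  then show ?thesis
    using integrable_bounded_linear[OF bounded_linear_Rep_banach_copy] by fastforce
qed

lemma norm_diff_sq_le: "(norm (a - b))\<^sup>2 \<le> 2 * (norm a)\<^sup>2 + 2 * (norm b)\<^sup>2"
  for a b :: "'a::real_normed_vector"
proof -
  have "(norm (a - b))\<^sup>2 \<le> (norm a + norm b)\<^sup>2"
    by (intro power_mono norm_triangle_ineq4) simp
  also have "\<dots> \<le> 2 * (norm a)\<^sup>2 + 2 * (norm b)\<^sup>2"
    using sum_squares_bound[of "norm a" "norm b"] by (simp add: power2_sum)
  finally show ?thesis .
qed

lemma abs_inner_le_sum_sq: "\<bar>a \<bullet> b\<bar> \<le> (norm a)\<^sup>2 + (norm b)\<^sup>2"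
  for a b :: "'a::real_inner"
proof -
  have "\<bar>a \<bullet> b\<bar> \<le> norm a * norm b" by (rule Cauchy_Schwarz_ineq2)
  also have "\<dots> \<le> (norm a)\<^sup>2 + (norm b)\<^sup>2"
    using sum_squares_bound[of "norm a" "norm b"] mult_nonneg_nonneg[OF norm_ge_zero norm_ge_zero, of a b]
    by linarith
  finally show ?thesis .
qed

lemma ennreal_integral_le_nn_integral:
  fixes h :: "'a \<Rightarrow> real"
  assumes "\<And>x. 0 \<le> h x"
  shows "ennreal (\<integral>x. h x \<partial>M) \<le> (\<integral>\<^sup>+x. ennreal (h x) \<partial>M)"
  using assms integral_norm_bound_ennreal[of M h]
  by (cases "integrable M h") (auto simp: not_integrable_integral_eq)

lemma borel_measurable_integral_kernel:
  fixes h :: "'a \<Rightarrow> 'b \<Rightarrow> real"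
  assumes [measurable]: "(\<lambda>(x, y). h x y) \<in> borel_measurable (N \<Otimes>\<^sub>M M)"
    and [measurable]: "L \<in> measurable N (subprob_algebra M)"
  shows "(\<lambda>x. \<integral>y. h x y \<partial>L x) \<in> borel_measurable N"
proof -
  have "(\<lambda>x. distr (L x) (N \<Otimes>\<^sub>M M) (Pair x)) \<in> measurable N (subprob_algebra (N \<Otimes>\<^sub>M M))"
    by (rule measurable_distr2) measurable
  then have "(\<lambda>x. \<integral>p. h (fst p) (snd p) \<partial>distr (L x) (N \<Otimes>\<^sub>M M) (Pair x)) \<in> borel_measurable N"
    by measurable
  then show ?thesis
  proof (rule measurable_cong[THEN iffD1, rotated])
    fix x assume "x \<in> space N"
    then have "Pair x \<in> measurable (L x) (N \<Otimes>\<^sub>M M)"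
      by (simp add: measurable_cong_sets[OF sets_kernel[of L] refl])
    moreover have "(\<lambda>p. h (fst p) (snd p)) \<in> borel_measurable (N \<Otimes>\<^sub>M M)"
      using assms(1) by (simp add: split_beta')
    ultimately show "(\<integral>p. h (fst p) (snd p) \<partial>distr (L x) (N \<Otimes>\<^sub>M M) (Pair x)) = (\<integral>y. h x y \<partial>L x)"
      by (simp only: integral_distr fst_conv snd_conv)
  qed
qed

lemma ennreal_nested_integral_le:
  fixes h :: "'a \<Rightarrow> 'b \<Rightarrow> real"
  assumes "\<And>x y. 0 \<le> h x y"
  shows "ennreal (\<integral>x. \<integral>y. h x y \<partial>L x \<partial>M) \<le> (\<integral>\<^sup>+x. \<integral>\<^sup>+y. ennreal (h x y) \<partial>L x \<partial>M)"
proof -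
  have "ennreal (\<integral>x. \<integral>y. h x y \<partial>L x \<partial>M) \<le> (\<integral>\<^sup>+x. ennreal (\<integral>y. h x y \<partial>L x) \<partial>M)"
    using assms by (intro ennreal_integral_le_nn_integral integral_nonneg) auto
  also have "\<dots> \<le> (\<integral>\<^sup>+x. \<integral>\<^sup>+y. ennreal (h x y) \<partial>L x \<partial>M)"
    using assms by (intro nn_integral_mono ennreal_integral_le_nn_integral)
  finally show ?thesis .
qed

lemma nn_integral_le_twice_add:
  assumes "a \<in> borel_measurable M" "b \<in> borel_measurable M"
    and "\<And>x. x \<in> space M \<Longrightarrow> h x \<le> 2 * a x + 2 * b x"
  shows "(\<integral>\<^sup>+x. h x \<partial>M) \<le> 2 * (\<integral>\<^sup>+x. a x \<partial>M) + 2 * (\<integral>\<^sup>+x. b x \<partial>M)"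
proof -
  have "(\<integral>\<^sup>+x. h x \<partial>M) \<le> (\<integral>\<^sup>+x. 2 * a x + 2 * b x \<partial>M)"
    using assms(3) by (rule nn_integral_mono)
  also have "\<dots> = 2 * (\<integral>\<^sup>+x. a x \<partial>M) + 2 * (\<integral>\<^sup>+x. b x \<partial>M)"
    using assms(1,2) by (simp add: nn_integral_add nn_integral_cmult)
  finally show ?thesis .
qed

lemma ennreal_norm_sq_le_twice_add:
  fixes x y :: "'a::real_normed_vector"
  assumes "\<bar>c\<bar> \<le> 1"
  shows "ennreal ((norm (c *\<^sub>R x + y))\<^sup>2) \<le> 2 * ennreal ((norm x)\<^sup>2) + 2 * ennreal ((norm y)\<^sup>2)"
proof -
  have "(\<bar>c\<bar> * norm x)\<^sup>2 \<le> (norm x)\<^sup>2"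
    using assms by (intro power_mono) (auto intro: mult_left_le_one_le)
  moreover have "(norm (c *\<^sub>R x + y))\<^sup>2 \<le> 2 * (\<bar>c\<bar> * norm x)\<^sup>2 + 2 * (norm y)\<^sup>2"
    using norm_diff_sq_le[of "c *\<^sub>R x" "- y"] by simp
  ultimately have "(norm (c *\<^sub>R x + y))\<^sup>2 \<le> 2 * (norm x)\<^sup>2 + 2 * (norm y)\<^sup>2"
    by linarith
  then have "ennreal ((norm (c *\<^sub>R x + y))\<^sup>2) \<le> ennreal (2 * (norm x)\<^sup>2 + 2 * (norm y)\<^sup>2)"
    by (rule ennreal_leI)
  then show ?thesis
    by (simp add: ennreal_mult)
qed

lemma ennreal_norm_diff_sq_le:
  fixes x y :: "'a::real_normed_vector"
  shows "ennreal ((norm (x - y))\<^sup>2) \<le> 2 * ennreal ((norm x)\<^sup>2) + 2 * ennreal ((norm y)\<^sup>2)"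
  using ennreal_norm_sq_le_twice_add[of 1 x "- y"] by simp

section \<open>Mixtures with densities\<close>

locale density_mixture =
  fixes \<nu> :: "'a measure" and M :: "'b measure"
    and K :: "'a \<Rightarrow> 'b measure" and W :: "'a \<Rightarrow> 'b \<Rightarrow> real"
  assumes prob_space_mixing: "prob_space \<nu>"
    and prob_space_mixture: "prob_space M"
    and K_measurable [measurable]: "K \<in> measurable \<nu> (subprob_algebra M)"
    and mixture_eq_bind: "M = \<nu> \<bind> K"
    and W_nonneg: "\<And>f g. 0 \<le> W f g"
    and W_measurable [measurable]: "(\<lambda>(f, g). W f g) \<in> borel_measurable (\<nu> \<Otimes>\<^sub>M M)"
    and K_density: "AE f in \<nu>. K f = density M (\<lambda>g. ennreal (W f g))"
begin

sublocale pair_prob_space \<nu> M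
proof -
  interpret mixing: prob_space \<nu> by (rule prob_space_mixing)
  interpret mixture: prob_space M by (rule prob_space_mixture)
  show "pair_prob_space \<nu> M" ..
qed

lemmas borel_measurable_nn_integral_K [measurable (raw)] =
  nn_integral_measurable_subprob_algebra2[OF _ K_measurable]

lemma nn_integral_K:
  fixes h :: "'a \<Rightarrow> 'b \<Rightarrow> ennreal"
  assumes [measurable]: "(\<lambda>(f, g). h f g) \<in> borel_measurable (\<nu> \<Otimes>\<^sub>M M)"
  shows "(\<integral>\<^sup>+f. \<integral>\<^sup>+g. h f g \<partial>K f \<partial>\<nu>) = (\<integral>\<^sup>+(f, g). W f g * h f g \<partial>(\<nu> \<Otimes>\<^sub>M M))"
proof -
  have "(\<integral>\<^sup>+f. \<integral>\<^sup>+g. h f g \<partial>K f \<partial>\<nu>) = (\<integral>\<^sup>+f. \<integral>\<^sup>+g. W f g * h f g \<partial>M \<partial>\<nu>)"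
    using K_density AE_space[of \<nu>]
  proof (intro nn_integral_cong_AE, eventually_elim)
    case (elim f)
    then show ?case by (simp add: nn_integral_density)
  qed
  also have "\<dots> = (\<integral>\<^sup>+(f, g). W f g * h f g \<partial>(\<nu> \<Otimes>\<^sub>M M))"
    by (subst M2.nn_integral_fst[symmetric]) auto
  finally show ?thesis .
qed

lemma nn_integral_K_snd:
  assumes "k \<in> borel_measurable M"
  shows "(\<integral>\<^sup>+f. \<integral>\<^sup>+g. k g \<partial>K f \<partial>\<nu>) = (\<integral>\<^sup>+g. k g \<partial>M)"
  using nn_integral_bind[OF assms K_measurable] by (simp flip: mixture_eq_bind)

lemma W_normalized: "AE g in M. (\<integral>\<^sup>+f. W f g \<partial>\<nu>) = 1"
proof (rule M2.density_unique2)
  fix A assume A [measurable]: "A \<in> sets M"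
  have "(\<integral>\<^sup>+g\<in>A. (\<integral>\<^sup>+f. W f g \<partial>\<nu>) \<partial>M) = (\<integral>\<^sup>+g. \<integral>\<^sup>+f. ennreal (W f g) * indicator A g \<partial>\<nu> \<partial>M)"
  proof (rule nn_integral_cong)
    fix g assume [measurable]: "g \<in> space M"
    show "(\<integral>\<^sup>+f. W f g \<partial>\<nu>) * indicator A g = (\<integral>\<^sup>+f. ennreal (W f g) * indicator A g \<partial>\<nu>)"
      by (subst nn_integral_multc) auto
  qed
  also have "\<dots> = (\<integral>\<^sup>+f. \<integral>\<^sup>+g. indicator A g \<partial>K f \<partial>\<nu>)"
    by (subst nn_integral_K) (auto simp: nn_integral_snd[symmetric] split_beta')
  also have "\<dots> = (\<integral>\<^sup>+g\<in>A. 1 \<partial>M)"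
    by (simp add: nn_integral_K_snd)
  finally show "(\<integral>\<^sup>+g\<in>A. (\<integral>\<^sup>+f. W f g \<partial>\<nu>) \<partial>M) = (\<integral>\<^sup>+g\<in>A. 1 \<partial>M)" .
qed measurable

lemma W_integrable_normalized:
  "AE g in M. integrable \<nu> (\<lambda>f. W f g) \<and> (\<integral>f. W f g \<partial>\<nu>) = 1"
  using W_normalized AE_space[of M]
proof eventually_elim
  case (elim g)
  then show ?case
    by (auto simp: integrableI_nonneg integral_eq_nn_integral W_nonneg)
qed

lemma integral_K:
  fixes h :: "'a \<Rightarrow> 'b \<Rightarrow> real"
  assumes [measurable]: "(\<lambda>(f, g). h f g) \<in> borel_measurable (\<nu> \<Otimes>\<^sub>M M)"
    and nonneg: "\<And>f g. 0 \<le> h f g"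
    and int: "integrable (\<nu> \<Otimes>\<^sub>M M) (\<lambda>(f, g). W f g * h f g)"
  shows "(\<integral>f. \<integral>g. h f g \<partial>K f \<partial>\<nu>) = (\<integral>(f, g). W f g * h f g \<partial>(\<nu> \<Otimes>\<^sub>M M))"
proof -
  let ?I = "\<lambda>f. \<integral>\<^sup>+g. ennreal (h f g) \<partial>K f"
  have nn_eq: "(\<integral>\<^sup>+f. ?I f \<partial>\<nu>) = (\<integral>\<^sup>+(f, g). ennreal (W f g * h f g) \<partial>(\<nu> \<Otimes>\<^sub>M M))"
    by (simp add: nn_integral_K split_beta' ennreal_mult W_nonneg nonneg)
  also have "\<dots> < \<infinity>"
    using int by (simp add: integrable_iff_bounded split_beta' W_nonneg nonneg)
  finally have "AE f in \<nu>. ?I f \<noteq> \<infinity>"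
    by (intro nn_integral_PInf_AE) auto
  have "(\<integral>f. \<integral>g. h f g \<partial>K f \<partial>\<nu>) = (\<integral>f. enn2real (?I f) \<partial>\<nu>)"
  proof (rule Bochner_Integration.integral_cong[OF refl])
    fix f assume "f \<in> space \<nu>"
    then show "(\<integral>g. h f g \<partial>K f) = enn2real (?I f)"
      by (intro integral_eq_nn_integral)
        (auto simp: nonneg measurable_cong_sets[OF sets_kernel[OF K_measurable]])
  qed
  also have "\<dots> = enn2real (\<integral>\<^sup>+f. ennreal (enn2real (?I f)) \<partial>\<nu>)"
    by (rule integral_eq_nn_integral) auto
  also have "(\<integral>\<^sup>+f. ennreal (enn2real (?I f)) \<partial>\<nu>) = (\<integral>\<^sup>+f. ?I f \<partial>\<nu>)"
    using \<open>AE f in \<nu>. ?I f \<noteq> \<infinity>\<close> by (intro nn_integral_cong_AE) (auto simp: less_top)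
  also have "enn2real \<dots> = (\<integral>(f, g). W f g * h f g \<partial>(\<nu> \<Otimes>\<^sub>M M))"
    unfolding nn_eq
    by (subst integral_eq_nn_integral) (auto simp: split_beta' W_nonneg nonneg)
  finally show ?thesis .
qed

lemma integrable_weighted:
  fixes X :: "'a \<Rightarrow> 'b \<Rightarrow> 'c::{real_normed_vector, polish_space}"
  assumes [measurable]: "(\<lambda>(f, g). X f g) \<in> borel_measurable (\<nu> \<Otimes>\<^sub>M M)"
    and L2: "(\<integral>\<^sup>+f. \<integral>\<^sup>+g. ennreal ((norm (X f g))\<^sup>2) \<partial>K f \<partial>\<nu>) < \<infinity>"
  shows "AE g in M. integrable \<nu> (\<lambda>f. W f g *\<^sub>R X f g)"
proof -
  let ?J = "\<lambda>g. \<integral>\<^sup>+f. ennreal (W f g * (norm (X f g))\<^sup>2) \<partial>\<nu>"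
  have "(\<integral>\<^sup>+g. ?J g \<partial>M) = (\<integral>\<^sup>+f. \<integral>\<^sup>+g. ennreal ((norm (X f g))\<^sup>2) \<partial>K f \<partial>\<nu>)"
    by (simp add: nn_integral_K nn_integral_snd[symmetric] split_beta' ennreal_mult W_nonneg)
  then have "AE g in M. ?J g \<noteq> \<infinity>"
    using L2 by (intro nn_integral_PInf_AE) auto
  with W_normalized AE_space[of M] show ?thesis
  proof eventually_elim
    case (elim g)
    note [measurable] = \<open>g \<in> space M\<close>
    have "(\<integral>\<^sup>+f. norm (W f g *\<^sub>R X f g) \<partial>\<nu>)
        \<le> (\<integral>\<^sup>+f. ennreal (W f g) + ennreal (W f g * (norm (X f g))\<^sup>2) \<partial>\<nu>)"
    proof (rule nn_integral_mono)
      fix f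
      have "norm (X f g) \<le> 1 + (norm (X f g))\<^sup>2"
        using sum_squares_bound[of "norm (X f g)" 1] norm_ge_zero[of "X f g"] by (smt (verit) power_one)
      then have "W f g * norm (X f g) \<le> W f g + W f g * (norm (X f g))\<^sup>2"
        using mult_left_mono[OF _ W_nonneg, of "norm (X f g)" "1 + (norm (X f g))\<^sup>2" f g]
        by (simp add: algebra_simps)
      then show "ennreal (norm (W f g *\<^sub>R X f g)) \<le> ennreal (W f g) + ennreal (W f g * (norm (X f g))\<^sup>2)"
        by (simp add: W_nonneg ennreal_plus[symmetric] del: ennreal_plus)
    qed
    also have "\<dots> = (\<integral>\<^sup>+f. W f g \<partial>\<nu>) + ?J g"
      by (rule nn_integral_add) auto
    also have "\<dots> < \<infinity>"
      using elim by (simp add: less_top)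
    finally show "integrable \<nu> (\<lambda>f. W f g *\<^sub>R X f g)"
      by (intro integrableI_bounded_complete) auto
  qed
qed

lemma integral_weighted_affine:
  fixes Y :: "'a \<Rightarrow> 'b \<Rightarrow> 'c::{real_normed_vector, polish_space}"
    and B :: "'b \<Rightarrow> 'c \<Rightarrow> 'd::{real_normed_vector, second_countable_topology}"
  assumes [measurable]: "(\<lambda>(f, g). Y f g) \<in> borel_measurable (\<nu> \<Otimes>\<^sub>M M)"
    and L2: "(\<integral>\<^sup>+f. \<integral>\<^sup>+g. ennreal ((norm (Y f g))\<^sup>2) \<partial>K f \<partial>\<nu>) < \<infinity>"
    and B: "\<And>g. bounded_linear (B g)"
  shows "AE g in M. (\<integral>f. W f g *\<^sub>R (a g + B g (Y f g)) \<partial>\<nu>)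
                    = a g + B g (\<integral>f. W f g *\<^sub>R Y f g \<partial>\<nu>)"
  using integrable_weighted[OF assms(1) L2] W_integrable_normalized
proof eventually_elim
  case (elim g)
  interpret B: bounded_linear "B g" by (rule B)
  have "W f g *\<^sub>R (a g + B g (Y f g)) = W f g *\<^sub>R a g + B g (W f g *\<^sub>R Y f g)" for f
    by (simp add: scaleR_add_right B.scaleR)
  then show ?case
    using elim by (simp add: integral_bounded_linear[OF B] integrable_bounded_linear[OF B])
qed

text \<open>The bias-variance decomposition: by \<open>cond_mean\<close>, \<open>U g\<close> is the conditional mean of \<open>X f g\<close>
  given \<open>g\<close>, so the cross term \<open>\<integral>\<integral> X \<bullet> V\<close> equals \<open>\<integral> U \<bullet> V\<close>.\<close>

lemma sq_loss_decomposition: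
  fixes X :: "'a \<Rightarrow> 'b \<Rightarrow> 'c::{real_inner, polish_space}" and U V :: "'b \<Rightarrow> 'c"
  assumes [measurable]: "(\<lambda>(f, g). X f g) \<in> borel_measurable (\<nu> \<Otimes>\<^sub>M M)"
      "U \<in> borel_measurable M" "V \<in> borel_measurable M"
    and L2_X: "(\<integral>\<^sup>+f. \<integral>\<^sup>+g. ennreal ((norm (X f g))\<^sup>2) \<partial>K f \<partial>\<nu>) < \<infinity>"
    and L2_U: "(\<integral>\<^sup>+g. ennreal ((norm (U g))\<^sup>2) \<partial>M) < \<infinity>"
    and L2_V: "(\<integral>\<^sup>+g. ennreal ((norm (V g))\<^sup>2) \<partial>M) < \<infinity>"
    and cond_mean: "AE g in M. U g = (\<integral>f. W f g *\<^sub>R X f g \<partial>\<nu>)"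
  shows "(\<integral>f. \<integral>g. (norm (X f g - V g))\<^sup>2 \<partial>K f \<partial>\<nu>)
       = (\<integral>g. (norm (U g - V g))\<^sup>2 \<partial>M)
         + ((\<integral>f. \<integral>g. (norm (X f g))\<^sup>2 \<partial>K f \<partial>\<nu>) - (\<integral>g. (norm (U g))\<^sup>2 \<partial>M))"
proof -
  let ?P = "\<nu> \<Otimes>\<^sub>M M"
  have sq_diff: "(norm (x - y))\<^sup>2 = (norm x)\<^sup>2 - 2 * (x \<bullet> y) + (norm y)\<^sup>2" for x y :: 'c
    using dot_norm_neg[of x y] by simp
  have int_XX: "integrable ?P (\<lambda>(f, g). W f g * (norm (X f g))\<^sup>2)"
  proof (rule integrableI_nonneg)
    show "(\<integral>\<^sup>+p. ennreal ((\<lambda>(f, g). W f g * (norm (X f g))\<^sup>2) p) \<partial>?P) < \<infinity>"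
      using L2_X by (simp add: nn_integral_K split_beta' ennreal_mult W_nonneg)
  qed (auto simp: W_nonneg)
  have int_VV: "integrable ?P (\<lambda>(f, g). W f g * (norm (V g))\<^sup>2)"
  proof (rule integrableI_nonneg)
    show "(\<integral>\<^sup>+p. ennreal ((\<lambda>(f, g). W f g * (norm (V g))\<^sup>2) p) \<partial>?P) < \<infinity>"
      using L2_V nn_integral_K[of "\<lambda>f g. ennreal ((norm (V g))\<^sup>2)"]
      by (simp add: nn_integral_K_snd split_beta' ennreal_mult W_nonneg)
  qed (auto simp: W_nonneg)
  have int_XV: "integrable ?P (\<lambda>(f, g). W f g * (X f g \<bullet> V g))"
  proof (rule Bochner_Integration.integrable_bound[OF Bochner_Integration.integrable_add[OF int_XX int_VV]])
    show "AE p in ?P. norm ((\<lambda>(f, g). W f g * (X f g \<bullet> V g)) p)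
        \<le> norm ((\<lambda>(f, g). W f g * (norm (X f g))\<^sup>2) p + (\<lambda>(f, g). W f g * (norm (V g))\<^sup>2) p)"
      using mult_left_mono[OF abs_inner_le_sum_sq W_nonneg]
      by (intro AE_I2) (auto simp: abs_mult W_nonneg distrib_left split_beta')
  qed measurable
  have expand: "(\<lambda>(f, g). W f g * (norm (X f g - V g))\<^sup>2)
      = (\<lambda>(f, g). W f g * (norm (X f g))\<^sup>2 - 2 * (W f g * (X f g \<bullet> V g)) + W f g * (norm (V g))\<^sup>2)"
    by (auto simp: sq_diff algebra_simps)
  have "(\<integral>f. \<integral>g. (norm (X f g - V g))\<^sup>2 \<partial>K f \<partial>\<nu>) = (\<integral>(f, g). W f g * (norm (X f g - V g))\<^sup>2 \<partial>?P)"
    using int_XX int_XV int_VV by (intro integral_K) (auto simp: expand split_beta')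
  also have "\<dots> = (\<integral>(f, g). W f g * (norm (X f g))\<^sup>2 - 2 * (W f g * (X f g \<bullet> V g)) + W f g * (norm (V g))\<^sup>2 \<partial>?P)"
    by (simp only: expand)
  also have "\<dots> = (\<integral>f. \<integral>g. (norm (X f g))\<^sup>2 \<partial>K f \<partial>\<nu>)
      - 2 * (\<integral>(f, g). W f g * (X f g \<bullet> V g) \<partial>?P) + (\<integral>(f, g). W f g * (norm (V g))\<^sup>2 \<partial>?P)"
    using int_XX int_XV int_VV by (simp add: integral_K split_beta')
  also have "(\<integral>(f, g). W f g * (X f g \<bullet> V g) \<partial>?P) = (\<integral>g. U g \<bullet> V g \<partial>M)"
  proof -
    have "(\<integral>(f, g). W f g * (X f g \<bullet> V g) \<partial>?P) = (\<integral>g. \<integral>f. W f g * (X f g \<bullet> V g) \<partial>\<nu> \<partial>M)"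
      by (rule integral_snd[OF int_XV, symmetric])
    also have "\<dots> = (\<integral>g. U g \<bullet> V g \<partial>M)"
    proof (intro integral_cong_AE)
      show "AE g in M. (\<integral>f. W f g * (X f g \<bullet> V g) \<partial>\<nu>) = U g \<bullet> V g"
        using cond_mean integrable_weighted[OF assms(1) L2_X]
      proof eventually_elim
        case (elim g)
        then show ?case
          using integral_inner_left[of "V g" \<nu> "\<lambda>f. W f g *\<^sub>R X f g"] by simp
      qed
    qed measurable
    finally show ?thesis .
  qed
  also have "(\<integral>(f, g). W f g * (norm (V g))\<^sup>2 \<partial>?P) = (\<integral>g. (norm (V g))\<^sup>2 \<partial>M)"
  proof -
    have "(\<integral>(f, g). W f g * (norm (V g))\<^sup>2 \<partial>?P) = (\<integral>g. (\<integral>f. W f g \<partial>\<nu>) * (norm (V g))\<^sup>2 \<partial>M)"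
      using integral_snd[OF int_VV] by simp
    also have "\<dots> = (\<integral>g. (norm (V g))\<^sup>2 \<partial>M)"
    proof (rule integral_cong_AE)
      show "AE g in M. (\<integral>f. W f g \<partial>\<nu>) * (norm (V g))\<^sup>2 = (norm (V g))\<^sup>2"
        using W_integrable_normalized by eventually_elim simp
    qed measurable
    finally show ?thesis .
  qed
  also have "(\<integral>g. (norm (U g - V g))\<^sup>2 \<partial>M)
      = (\<integral>g. (norm (U g))\<^sup>2 \<partial>M) - 2 * (\<integral>g. U g \<bullet> V g \<partial>M) + (\<integral>g. (norm (V g))\<^sup>2 \<partial>M)"
  proof -
    have int_U: "integrable M (\<lambda>g. (norm (U g))\<^sup>2)" and int_V: "integrable M (\<lambda>g. (norm (V g))\<^sup>2)"
      using L2_U L2_V by (auto intro!: integrableI_nonneg)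
    moreover have "integrable M (\<lambda>g. U g \<bullet> V g)"
      by (rule Bochner_Integration.integrable_bound[OF Bochner_Integration.integrable_add[OF int_U int_V]])
        (auto intro: order_trans[OF abs_inner_le_sum_sq])
    ultimately show ?thesis by (simp add: sq_diff)
  qed
  ultimately show ?thesis by simp
qed

end

section \<open>The mean-flow identity\<close>

lemma bounded_linear_partial_derivative:
  assumes "(h has_derivative (\<lambda>(a, v). a *\<^sub>R c + D v)) F"
  shows "bounded_linear D"
proof -
  have "bounded_linear (\<lambda>v. (\<lambda>(a, v). a *\<^sub>R c + D v) ((0::real), v))"
    using has_derivative_bounded_linear[OF assms]
    by (rule bounded_linear_compose) (intro bounded_linear_Pair bounded_linear_zero bounded_linear_ident)
  then show ?thesis by simp
qed

lemma mean_velocity_identity: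
  fixes phi :: "real \<Rightarrow> 'f::real_normed_vector \<Rightarrow> 'f" and u :: "real \<Rightarrow> 'f \<Rightarrow> 'f"
  assumes phi_ode: "\<And>g t. t \<in> {0..1} \<Longrightarrow>
        ((\<lambda>s. phi s g) has_vector_derivative u t (phi t g)) (at t within {0..1})"
    and phi_bij: "\<And>t. t \<in> {0..1} \<Longrightarrow> bij (phi t)"
    and deriv: "((\<lambda>(s, x). mean_velocity phi s r x) has_derivative (\<lambda>(a, v). a *\<^sub>R c + D v)) (at (t, g))"
    and t: "0 < t" "t < 1"
  shows "mean_velocity phi t r g = (r - t) *\<^sub>R (c + D (u t g)) + u t g"
proof -
  interpret D: bounded_linear D by (rule bounded_linear_partial_derivative[OF deriv])
  have t01: "t \<in> {0..1}" using t by auto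
  obtain x where gx: "g = phi t x" using phi_bij[OF t01] by (metis bij_pointE)
  have flow_eq: "(r - s) *\<^sub>R mean_velocity phi s r (phi s x) = phi r x - phi s x" if "s \<in> {0..1}" for s
    using phi_bij[OF that] by (cases "s = r") (simp_all add: mean_velocity_def bij_is_inj)
  have "((\<lambda>s. (s, phi s x)) has_derivative (\<lambda>h. (h, h *\<^sub>R u t g))) (at t within {0..1})"
    using phi_ode[OF t01, of x] unfolding has_vector_derivative_def gx
    by (intro has_derivative_Pair has_derivative_ident)
  then have "((\<lambda>s. (\<lambda>(s, x). mean_velocity phi s r x) (s, phi s x)) has_derivative
      (\<lambda>h. (\<lambda>(a, v). a *\<^sub>R c + D v) (h, h *\<^sub>R u t g))) (at t within {0..1})"
    by (rule has_derivative_compose) (use deriv gx in simp)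
  then have "((\<lambda>s. mean_velocity phi s r (phi s x)) has_vector_derivative c + D (u t g)) (at t within {0..1})"
    by (simp add: has_vector_derivative_def D.scaleR scaleR_add_right)
  then have scaled: "((\<lambda>s. (r - s) *\<^sub>R mean_velocity phi s r (phi s x)) has_vector_derivative
      (r - t) *\<^sub>R (c + D (u t g)) - mean_velocity phi t r g) (at t within {0..1})"
    using gx by (auto intro!: derivative_eq_intros)
  have "((\<lambda>s. phi r x - phi s x) has_vector_derivative
      (r - t) *\<^sub>R (c + D (u t g)) - mean_velocity phi t r g) (at t within {0..1})"
    by (rule has_vector_derivative_transform[OF t01 _ scaled]) (simp add: flow_eq)
  moreover have "((\<lambda>s. phi r x - phi s x) has_vector_derivative 0 - u t g) (at t within {0..1})"
    using phi_ode[OF t01, of x] gx by (intro derivative_eq_intros) auto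
  moreover have "at t within {0..1} = at t"
    using t by (intro at_within_Icc_at) auto
  ultimately have "(r - t) *\<^sub>R (c + D (u t g)) - mean_velocity phi t r g = 0 - u t g"
    using vector_derivative_unique_at by metis
  then show ?thesis by (simp add: algebra_simps)
qed

lemma ex_integral_eq_plus_const:
  fixes F G :: "'p \<Rightarrow> 'a \<Rightarrow> real"
  assumes "\<And>\<theta>. integrable T (F \<theta>)" "\<And>\<theta>. integrable T (G \<theta>)"
    and "\<And>\<theta>. AE x in T. F \<theta> x = G \<theta> x + c x"
  shows "\<exists>C. \<forall>\<theta>. (\<integral>x. F \<theta> x \<partial>T) = (\<integral>x. G \<theta> x \<partial>T) + C"
proof (intro exI allI)
  fix \<theta> \<theta>0 :: 'p
  have "(\<integral>x. F \<theta> x \<partial>T) - (\<integral>x. G \<theta> x \<partial>T) = (\<integral>x. F \<theta> x - G \<theta> x \<partial>T)"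
    using assms by simp
  also have "\<dots> = (\<integral>x. F \<theta>0 x - G \<theta>0 x \<partial>T)"
  proof (rule integral_cong_AE)
    show "AE x in T. F \<theta> x - G \<theta> x = F \<theta>0 x - G \<theta>0 x"
      using assms(3)[of \<theta>] assms(3)[of \<theta>0] by eventually_elim simp
  qed (simp_all add: assms(1,2) borel_measurable_integrable)
  finally show "(\<integral>x. F \<theta> x \<partial>T) = (\<integral>x. G \<theta> x \<partial>T) + (\<integral>x. F \<theta>0 x - G \<theta>0 x \<partial>T)"
    by simp
qed

section \<open>The mean-flow model\<close>

lemma measurable_cond_velocity [measurable (raw)]:
  fixes b c :: "'a \<Rightarrow> 'f::{real_normed_vector, second_countable_topology}"
  assumes [measurable]: "a \<in> borel_measurable M" "b \<in> borel_measurable M" "c \<in> borel_measurable M"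
  shows "(\<lambda>x. cond_velocity smin (a x) (b x) (c x)) \<in> borel_measurable M"
  unfolding cond_velocity_def by measurable

locale meanflow_model =
  fixes smin :: real
    and \<nu> :: "'f::{real_inner,polish_space} measure"
    and mu :: "real \<Rightarrow> 'f \<Rightarrow> 'f measure"
    and mum :: "real \<Rightarrow> 'f measure"
    and rho :: "real \<Rightarrow> 'f \<Rightarrow> 'f \<Rightarrow> real"
    and phi :: "real \<Rightarrow> 'f \<Rightarrow> 'f"
    and ubdt :: "real \<Rightarrow> real \<Rightarrow> 'f \<Rightarrow> 'f"
    and Dub :: "real \<Rightarrow> real \<Rightarrow> 'f \<Rightarrow> 'f \<Rightarrow> 'f"
    and T :: "(real \<times> real) measure"
  assumes nu: "prob_space \<nu>" "sets \<nu> = sets borel"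
    and mu: "\<And>t f. prob_space (mu t f)" "\<And>t f. sets (mu t f) = sets borel"
    and mu_kernel: "(\<lambda>(t, f). mu t f) \<in> measurable borel (subprob_algebra borel)"
    and mum_sets: "\<And>t. sets (mum t) = sets borel"
    and mum: "\<And>t A. A \<in> sets borel \<Longrightarrow> emeasure (mum t) A = (\<integral>\<^sup>+ f. emeasure (mu t f) A \<partial>\<nu>)"
    and rho_nonneg: "\<And>t f g. 0 \<le> rho t f g"
    and rho_meas: "(\<lambda>(t, f, g). rho t f g) \<in> borel_measurable borel"
    and rho_dens: "AE f in \<nu>. \<forall>t\<in>{0..1}. mu t f = density (mum t) (\<lambda>g. ennreal (rho t f g))"
    and phi_ode: "\<And>g t. t \<in> {0..1} \<Longrightarrow>
        ((\<lambda>s. phi s g) has_vector_derivative marginal_velocity \<nu> rho smin t (phi t g)) (at t within {0..1})"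
    and phi_bij: "\<And>t. t \<in> {0..1} \<Longrightarrow> bij (phi t)"
    and ubar_deriv: "\<And>t r g. 0 < t \<Longrightarrow> t < r \<Longrightarrow> r < 1 \<Longrightarrow>
        ((\<lambda>(s, x). mean_velocity phi s r x) has_derivative
           (\<lambda>(a, v). a *\<^sub>R ubdt t r g + Dub t r g v)) (at (t, g))"
    and T: "prob_space T" "sets T = sets borel"
    and T_supp: "AE (t, r) in T. 0 < t \<and> t < r \<and> r < 1"
    and meas_ubar: "(\<lambda>((t, r), g). mean_velocity phi t r g) \<in> borel_measurable borel"
    and meas_D: "(\<lambda>((t, r), f, g). ubdt t r g + Dub t r g (cond_velocity smin t f g)) \<in> borel_measurable borel"
    and L2_ubar: "(\<integral>\<^sup>+ (t, r). (\<integral>\<^sup>+ g. ennreal ((norm (mean_velocity phi t r g))\<^sup>2) \<partial>mum t) \<partial>T) < \<infinity>"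
    and L2_D: "(\<integral>\<^sup>+ (t, r). (\<integral>\<^sup>+ f. (\<integral>\<^sup>+ g.
        ennreal ((norm (ubdt t r g + Dub t r g (cond_velocity smin t f g)))\<^sup>2) \<partial>mu t f) \<partial>\<nu>) \<partial>T) < \<infinity>"
    and L2_uf: "(\<integral>\<^sup>+ (t, r). (\<integral>\<^sup>+ f. (\<integral>\<^sup>+ g.
        ennreal ((norm (cond_velocity smin t f g))\<^sup>2) \<partial>mu t f) \<partial>\<nu>) \<partial>T) < \<infinity>"
begin

abbreviation cond_target :: "real \<Rightarrow> real \<Rightarrow> 'f \<Rightarrow> 'f \<Rightarrow> 'f" where
  "cond_target t r f g \<equiv>
     (r - t) *\<^sub>R (ubdt t r g + Dub t r g (cond_velocity smin t f g)) + cond_velocity smin t f g"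

lemma sets_T_pair [measurable_cong]: "sets T = sets (borel \<Otimes>\<^sub>M borel)"
  by (simp only: T(2) borel_prod)

lemmas [measurable_cong] = nu(2) mu(2) mum_sets

lemma measurable_mu [measurable (raw)]:
  assumes [measurable]: "a \<in> borel_measurable N" "b \<in> borel_measurable N"
  shows "(\<lambda>x. mu (a x) (b x)) \<in> measurable N (subprob_algebra borel)"
  using measurable_compose[OF _ mu_kernel, of "\<lambda>x. (a x, b x)"] by simp

lemma measurable_rho [measurable (raw)]:
  assumes [measurable]: "a \<in> borel_measurable N" "b \<in> borel_measurable N" "c \<in> borel_measurable N"
  shows "(\<lambda>x. rho (a x) (b x) (c x)) \<in> borel_measurable N"
  using measurable_compose[OF _ rho_meas, of "\<lambda>x. (a x, b x, c x)"] by simp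

lemma measurable_mean_velocity [measurable (raw)]:
  assumes [measurable]: "a \<in> borel_measurable N" "b \<in> borel_measurable N" "c \<in> borel_measurable N"
  shows "(\<lambda>x. mean_velocity phi (a x) (b x) (c x)) \<in> borel_measurable N"
  using measurable_compose[OF _ meas_ubar, of "\<lambda>x. ((a x, b x), c x)"] by simp

lemma measurable_D [measurable (raw)]:
  assumes [measurable]: "a \<in> borel_measurable N" "b \<in> borel_measurable N"
    "c \<in> borel_measurable N" "d \<in> borel_measurable N"
  shows "(\<lambda>x. ubdt (a x) (b x) (d x) + Dub (a x) (b x) (d x) (cond_velocity smin (a x) (c x) (d x)))
    \<in> borel_measurable N"
  using measurable_compose[OF _ meas_D, of "\<lambda>x. ((a x, b x), c x, d x)"] by simp

lemma mum_eq_bind: "mum t = \<nu> \<bind> mu t"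
proof (rule measure_eqI)
  have "space \<nu> \<noteq> {}"
    using sets_eq_imp_space_eq[OF nu(2)] by simp
  then show "sets (mum t) = sets (\<nu> \<bind> mu t)"
    using sets_bind[of \<nu> "mu t" borel] by (simp add: mu(2) mum_sets)
  fix A assume "A \<in> sets (mum t)"
  with \<open>space \<nu> \<noteq> {}\<close> show "emeasure (mum t) A = emeasure (\<nu> \<bind> mu t) A"
    by (simp add: mum mum_sets emeasure_bind[where N=borel])
qed

lemma measurable_mum [measurable (raw)]:
  assumes [measurable]: "a \<in> borel_measurable N"
  shows "(\<lambda>x. mum (a x)) \<in> measurable N (subprob_algebra borel)"
proof -
  have "\<nu> \<in> space (subprob_algebra \<nu>)"
    using nu(1) by (simp add: space_subprob_algebra prob_space_imp_subprob_space)
  then have "(\<lambda>x. \<nu> \<bind> mu (a x)) \<in> measurable N (subprob_algebra borel)"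
    by (intro measurable_bind[OF measurable_const]) measurable
  then show ?thesis by (simp add: mum_eq_bind)
qed

lemma prob_space_mum: "prob_space (mum t)"
proof
  have "emeasure (mum t) UNIV = (\<integral>\<^sup>+f. emeasure (mu t f) (space (mu t f)) \<partial>\<nu>)"
    using sets_eq_imp_space_eq[OF mu(2)] by (simp add: mum)
  also have "\<dots> = 1"
    using prob_space.emeasure_space_1[OF nu(1)] by (simp add: prob_space.emeasure_space_1[OF mu(1)])
  finally show "emeasure (mum t) (space (mum t)) = 1"
    using sets_eq_imp_space_eq[OF mum_sets] by simp
qed

lemma density_mixture_mum:
  assumes "t \<in> {0..1}"
  shows "density_mixture \<nu> (mum t) (mu t) (rho t)"
proof (rule density_mixture.intro[OF nu(1) prob_space_mum _ mum_eq_bind rho_nonneg])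
  show "mu t \<in> measurable \<nu> (subprob_algebra (mum t))"
    unfolding subprob_algebra_cong[OF mum_sets] by measurable
  show "(\<lambda>(f, g). rho t f g) \<in> borel_measurable (\<nu> \<Otimes>\<^sub>M mum t)"
    by measurable
  show "AE f in \<nu>. mu t f = density (mum t) (\<lambda>g. ennreal (rho t f g))"
    using rho_dens by (rule eventually_mono) (use assms in blast)
qed

lemma mean_velocity_eq_cond_mean:
  assumes tr: "0 < t" "t < r" "r < 1"
    and L2_Y: "(\<integral>\<^sup>+f. \<integral>\<^sup>+g. ennreal ((norm (cond_velocity smin t f g))\<^sup>2) \<partial>mu t f \<partial>\<nu>) < \<infinity>"
  shows "AE g in mum t. mean_velocity phi t r g = (\<integral>f. rho t f g *\<^sub>R cond_target t r f g \<partial>\<nu>)"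
proof -
  interpret density_mixture \<nu> "mum t" "mu t" "rho t"
    using tr by (intro density_mixture_mum) auto
  have "bounded_linear (\<lambda>v. (r - t) *\<^sub>R Dub t r g v + v)" for g
    using bounded_linear_partial_derivative[OF ubar_deriv[OF tr]]
    by (intro bounded_linear_add bounded_linear_ident bounded_linear_compose[OF bounded_linear_scaleR_right])
  then have "AE g in mum t.
      (\<integral>f. rho t f g *\<^sub>R ((r - t) *\<^sub>R ubdt t r g + ((r - t) *\<^sub>R Dub t r g (cond_velocity smin t f g)
                                                 + cond_velocity smin t f g)) \<partial>\<nu>)
      = (r - t) *\<^sub>R ubdt t r g + ((r - t) *\<^sub>R Dub t r g (marginal_velocity \<nu> rho smin t g)
                                 + marginal_velocity \<nu> rho smin t g)"
    unfolding marginal_velocity_def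
    by (intro integral_weighted_affine[where a = "\<lambda>g. (r - t) *\<^sub>R ubdt t r g"
          and B = "\<lambda>g v. (r - t) *\<^sub>R Dub t r g v + v", OF _ L2_Y]) measurable
  moreover have "mean_velocity phi t r g = (r - t) *\<^sub>R (ubdt t r g + Dub t r g (marginal_velocity \<nu> rho smin t g))
      + marginal_velocity \<nu> rho smin t g" for g
    using tr by (intro mean_velocity_identity[OF phi_ode phi_bij ubar_deriv[OF tr]]) auto
  ultimately show ?thesis
    by (elim eventually_mono) (simp only: scaleR_add_right add.assoc)
qed

text \<open>Kernel rules are declared with the target \<open>borel\<close> instantiated, which the measurability
  prover cannot guess.\<close>

lemmas [measurable] = nn_integral_measurable_subprob_algebra2[where N = "borel :: 'f measure"]

lemma nn_integral_cond_target_le: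
  assumes "\<bar>r - t\<bar> \<le> 1"
  shows "(\<integral>\<^sup>+f. \<integral>\<^sup>+g. ennreal ((norm (cond_target t r f g))\<^sup>2) \<partial>mu t f \<partial>\<nu>)
    \<le> 2 * (\<integral>\<^sup>+f. \<integral>\<^sup>+g. ennreal ((norm (ubdt t r g + Dub t r g (cond_velocity smin t f g)))\<^sup>2) \<partial>mu t f \<partial>\<nu>)
      + 2 * (\<integral>\<^sup>+f. \<integral>\<^sup>+g. ennreal ((norm (cond_velocity smin t f g))\<^sup>2) \<partial>mu t f \<partial>\<nu>)"
  using assms
  by (intro nn_integral_le_twice_add ennreal_norm_sq_le_twice_add) measurable

lemma loss_identity_at:
  assumes tr: "0 < t" "t < r" "r < 1" and [measurable]: "V \<in> borel_measurable borel"
    and L2_D: "(\<integral>\<^sup>+f. \<integral>\<^sup>+g. ennreal ((norm (ubdt t r g + Dub t r g (cond_velocity smin t f g)))\<^sup>2) \<partial>mu t f \<partial>\<nu>) < \<infinity>"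
    and L2_Y: "(\<integral>\<^sup>+f. \<integral>\<^sup>+g. ennreal ((norm (cond_velocity smin t f g))\<^sup>2) \<partial>mu t f \<partial>\<nu>) < \<infinity>"
    and L2_U: "(\<integral>\<^sup>+g. ennreal ((norm (mean_velocity phi t r g))\<^sup>2) \<partial>mum t) < \<infinity>"
    and L2_V: "(\<integral>\<^sup>+g. ennreal ((norm (V g))\<^sup>2) \<partial>mum t) < \<infinity>"
  shows "(\<integral>f. \<integral>g. (norm (cond_target t r f g - V g))\<^sup>2 \<partial>mu t f \<partial>\<nu>)
       = (\<integral>g. (norm (mean_velocity phi t r g - V g))\<^sup>2 \<partial>mum t)
         + ((\<integral>f. \<integral>g. (norm (cond_target t r f g))\<^sup>2 \<partial>mu t f \<partial>\<nu>)
            - (\<integral>g. (norm (mean_velocity phi t r g))\<^sup>2 \<partial>mum t))"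
proof -
  interpret density_mixture \<nu> "mum t" "mu t" "rho t"
    using tr by (intro density_mixture_mum) auto
  have "(\<integral>\<^sup>+f. \<integral>\<^sup>+g. ennreal ((norm (cond_target t r f g))\<^sup>2) \<partial>mu t f \<partial>\<nu>) < \<infinity>"
    using nn_integral_cond_target_le[of r t] tr L2_D L2_Y
    by (auto simp: ennreal_mult_less_top order.strict_trans1)
  then show ?thesis
    by (intro sq_loss_decomposition mean_velocity_eq_cond_mean tr L2_Y L2_U L2_V) measurable
qed

sublocale N: prob_space \<nu> by (rule nu(1))

lemmas [measurable] = borel_measurable_integral_kernel[where M = "borel :: 'f measure"]

lemma measurable_T_pair:
  fixes V :: "real \<Rightarrow> real \<Rightarrow> 'f \<Rightarrow> 'f"
  assumes "(\<lambda>((t, r), g). V t r g) \<in> borel_measurable borel"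
  shows "(\<lambda>(x, g). V (fst x) (snd x) g) \<in> borel_measurable (T \<Otimes>\<^sub>M borel)"
    and "V t r \<in> borel_measurable borel"
proof -
  show *: "(\<lambda>(x, g). V (fst x) (snd x) g) \<in> borel_measurable (T \<Otimes>\<^sub>M borel)"
    using assms
    by (simp add: measurable_cong_sets[OF sets_pair_measure_cong[OF T(2) refl] refl] borel_prod split_beta')
  show "V t r \<in> borel_measurable borel"
    using measurable_Pair2[OF *, of "(t, r)"] sets_eq_imp_space_eq[OF T(2)] by simp
qed

lemma AE_loss_identity:
  fixes V :: "real \<Rightarrow> real \<Rightarrow> 'f \<Rightarrow> 'f"
  assumes V: "(\<lambda>((t, r), g). V t r g) \<in> borel_measurable borel"
    and L2_V: "(\<integral>\<^sup>+(t, r). (\<integral>\<^sup>+g. ennreal ((norm (V t r g))\<^sup>2) \<partial>mum t) \<partial>T) < \<infinity>"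
  shows "AE (t, r) in T. (\<integral>f. \<integral>g. (norm (cond_target t r f g - V t r g))\<^sup>2 \<partial>mu t f \<partial>\<nu>)
       = (\<integral>g. (norm (mean_velocity phi t r g - V t r g))\<^sup>2 \<partial>mum t)
         + ((\<integral>f. \<integral>g. (norm (cond_target t r f g))\<^sup>2 \<partial>mu t f \<partial>\<nu>)
            - (\<integral>g. (norm (mean_velocity phi t r g))\<^sup>2 \<partial>mum t))"
proof -
  note V_T [measurable] = measurable_T_pair[OF V]
  have "AE x in T. (\<integral>\<^sup>+g. ennreal ((norm (V (fst x) (snd x) g))\<^sup>2) \<partial>mum (fst x)) \<noteq> \<infinity>"
    using L2_V by (intro nn_integral_PInf_AE) (auto simp: split_beta')
  moreover have "AE x in T. (\<integral>\<^sup>+g. ennreal ((norm (mean_velocity phi (fst x) (snd x) g))\<^sup>2) \<partial>mum (fst x)) \<noteq> \<infinity>"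
    using L2_ubar by (intro nn_integral_PInf_AE) (auto simp: split_beta')
  moreover have "AE x in T. (\<integral>\<^sup>+f. \<integral>\<^sup>+g. ennreal ((norm (ubdt (fst x) (snd x) g
        + Dub (fst x) (snd x) g (cond_velocity smin (fst x) f g)))\<^sup>2) \<partial>mu (fst x) f \<partial>\<nu>) \<noteq> \<infinity>"
    using L2_D by (intro nn_integral_PInf_AE) (auto simp: split_beta')
  moreover have "AE x in T. (\<integral>\<^sup>+f. \<integral>\<^sup>+g. ennreal ((norm (cond_velocity smin (fst x) f g))\<^sup>2)
      \<partial>mu (fst x) f \<partial>\<nu>) \<noteq> \<infinity>"
    using L2_uf by (intro nn_integral_PInf_AE) (auto simp: split_beta')
  ultimately show ?thesis
    using T_supp
  proof eventually_elim
    case (elim x)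
    obtain t r where x: "x = (t, r)" by (cases x)
    with elim show ?case
      unfolding x prod.case fst_conv snd_conv by (intro loss_identity_at) (auto simp: less_top)
  qed
qed

lemma integrable_mean_velocity_loss:
  fixes V :: "real \<Rightarrow> real \<Rightarrow> 'f \<Rightarrow> 'f"
  assumes V: "(\<lambda>((t, r), g). V t r g) \<in> borel_measurable borel"
    and L2_V: "(\<integral>\<^sup>+(t, r). (\<integral>\<^sup>+g. ennreal ((norm (V t r g))\<^sup>2) \<partial>mum t) \<partial>T) < \<infinity>"
  shows "integrable T (\<lambda>(t, r). \<integral>g. (norm (mean_velocity phi t r g - V t r g))\<^sup>2 \<partial>mum t)"
proof (rule integrableI_nonneg)
  note V_T [measurable] = measurable_T_pair[OF V]
  show "(\<lambda>(t, r). \<integral>g. (norm (mean_velocity phi t r g - V t r g))\<^sup>2 \<partial>mum t) \<in> borel_measurable T"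
    by measurable
  show "AE x in T. 0 \<le> (\<lambda>(t, r). \<integral>g. (norm (mean_velocity phi t r g - V t r g))\<^sup>2 \<partial>mum t) x"
    by (intro AE_I2) (auto simp: split_beta')
  have "(\<integral>\<^sup>+x. ennreal ((\<lambda>(t, r). \<integral>g. (norm (mean_velocity phi t r g - V t r g))\<^sup>2 \<partial>mum t) x) \<partial>T)
      \<le> (\<integral>\<^sup>+(t, r). \<integral>\<^sup>+g. ennreal ((norm (mean_velocity phi t r g - V t r g))\<^sup>2) \<partial>mum t \<partial>T)"
    by (intro nn_integral_mono) (auto simp: split_beta' intro: ennreal_integral_le_nn_integral)
  also have "\<dots> \<le> 2 * (\<integral>\<^sup>+(t, r). \<integral>\<^sup>+g. ennreal ((norm (mean_velocity phi t r g))\<^sup>2) \<partial>mum t \<partial>T)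
      + 2 * (\<integral>\<^sup>+(t, r). \<integral>\<^sup>+g. ennreal ((norm (V t r g))\<^sup>2) \<partial>mum t \<partial>T)"
    by (intro nn_integral_le_twice_add)
      (auto simp: split_beta' intro!: nn_integral_le_twice_add ennreal_norm_diff_sq_le)
  also have "\<dots> < \<infinity>"
    using L2_ubar L2_V by (simp add: ennreal_mult_less_top)
  finally show "(\<integral>\<^sup>+x. ennreal ((\<lambda>(t, r). \<integral>g. (norm (mean_velocity phi t r g - V t r g))\<^sup>2 \<partial>mum t) x) \<partial>T) < \<infinity>" .
qed

lemma nn_integral_T_cond_target_finite:
  "(\<integral>\<^sup>+(t, r). \<integral>\<^sup>+f. \<integral>\<^sup>+g. ennreal ((norm (cond_target t r f g))\<^sup>2) \<partial>mu t f \<partial>\<nu> \<partial>T) < \<infinity>"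
proof -
  let ?D = "\<lambda>t r. \<integral>\<^sup>+f. \<integral>\<^sup>+g. ennreal ((norm (ubdt t r g + Dub t r g (cond_velocity smin t f g)))\<^sup>2)
    \<partial>mu t f \<partial>\<nu>"
  let ?Y = "\<lambda>t r. \<integral>\<^sup>+f. \<integral>\<^sup>+g. ennreal ((norm (cond_velocity smin t f g))\<^sup>2) \<partial>mu t f \<partial>\<nu>"
  have "(\<integral>\<^sup>+(t, r). \<integral>\<^sup>+f. \<integral>\<^sup>+g. ennreal ((norm (cond_target t r f g))\<^sup>2) \<partial>mu t f \<partial>\<nu> \<partial>T)
      \<le> (\<integral>\<^sup>+(t, r). 2 * ?D t r + 2 * ?Y t r \<partial>T)"
    using T_supp by (intro nn_integral_mono_AE) (auto intro!: nn_integral_cond_target_le elim!: eventually_mono)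
  also have "\<dots> \<le> 2 * (\<integral>\<^sup>+(t, r). ?D t r \<partial>T) + 2 * (\<integral>\<^sup>+(t, r). ?Y t r \<partial>T)"
    by (rule nn_integral_le_twice_add) (auto simp: split_beta')
  also have "\<dots> < \<infinity>"
    using L2_D L2_uf by (simp add: ennreal_mult_less_top)
  finally show ?thesis .
qed

lemma integrable_cond_target_loss:
  fixes V :: "real \<Rightarrow> real \<Rightarrow> 'f \<Rightarrow> 'f"
  assumes V: "(\<lambda>((t, r), g). V t r g) \<in> borel_measurable borel"
    and L2_V: "(\<integral>\<^sup>+(t, r). (\<integral>\<^sup>+f. (\<integral>\<^sup>+g. ennreal ((norm (V t r g))\<^sup>2) \<partial>mu t f) \<partial>\<nu>) \<partial>T) < \<infinity>"
  shows "integrable T (\<lambda>(t, r). \<integral>f. \<integral>g. (norm (cond_target t r f g - V t r g))\<^sup>2 \<partial>mu t f \<partial>\<nu>)"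
proof (rule integrableI_nonneg)
  note V_T [measurable] = measurable_T_pair[OF V]
  let ?L = "\<lambda>(t, r). \<integral>f. \<integral>g. (norm (cond_target t r f g - V t r g))\<^sup>2 \<partial>mu t f \<partial>\<nu>"
  show "?L \<in> borel_measurable T"
    by measurable
  show "AE x in T. 0 \<le> ?L x"
    by (intro AE_I2) (auto simp: split_beta' intro!: integral_nonneg)
  have "(\<integral>\<^sup>+x. ennreal (?L x) \<partial>T)
      \<le> (\<integral>\<^sup>+(t, r). \<integral>\<^sup>+f. \<integral>\<^sup>+g. ennreal ((norm (cond_target t r f g - V t r g))\<^sup>2) \<partial>mu t f \<partial>\<nu> \<partial>T)"
    by (intro nn_integral_mono) (auto simp: split_beta' intro: ennreal_nested_integral_le)
  also have "\<dots> \<le> 2 * (\<integral>\<^sup>+(t, r). \<integral>\<^sup>+f. \<integral>\<^sup>+g. ennreal ((norm (cond_target t r f g))\<^sup>2) \<partial>mu t f \<partial>\<nu> \<partial>T)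
      + 2 * (\<integral>\<^sup>+(t, r). \<integral>\<^sup>+f. \<integral>\<^sup>+g. ennreal ((norm (V t r g))\<^sup>2) \<partial>mu t f \<partial>\<nu> \<partial>T)"
    by (intro nn_integral_le_twice_add)
      (auto simp: split_beta' intro!: nn_integral_le_twice_add ennreal_norm_diff_sq_le)
  also have "\<dots> < \<infinity>"
    using nn_integral_T_cond_target_finite L2_V by (simp add: ennreal_mult_less_top)
  finally show "(\<integral>\<^sup>+x. ennreal (?L x) \<partial>T) < \<infinity>" .
qed

end

theorem theorem2:
  fixes smin :: real
    and C0 :: "'f::{real_inner,polish_space} \<Rightarrow> 'f"
    and \<nu> :: "'f measure"
    and mu :: "real \<Rightarrow> 'f \<Rightarrow> 'f measure"
    and mum :: "real \<Rightarrow> 'f measure"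
    and rho :: "real \<Rightarrow> 'f \<Rightarrow> 'f \<Rightarrow> real"
    and phi :: "real \<Rightarrow> 'f \<Rightarrow> 'f"
    and ubdt :: "real \<Rightarrow> real \<Rightarrow> 'f \<Rightarrow> 'f"
    and Dub :: "real \<Rightarrow> real \<Rightarrow> 'f \<Rightarrow> 'f \<Rightarrow> 'f"
    and ubth :: "'p \<Rightarrow> real \<Rightarrow> real \<Rightarrow> 'f \<Rightarrow> 'f"
    and T :: "(real \<times> real) measure"
  assumes smin: "0 < smin" "smin < 1"
    and C0: "covariance_operator C0"
    and nu: "prob_space \<nu>" "sets \<nu> = sets borel"
    and nu_L2: "(\<integral>\<^sup>+ f. ennreal ((norm f)\<^sup>2) \<partial>\<nu>) < \<infinity>"
    \<comment> \<open>conditional paths mu_t^f = N(t f, sigma_t^2 C0)\<close>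
    and mu_gauss: "\<And>t f. gaussian_measure (mu t f) (t *\<^sub>R f) (\<lambda>x. (sigma_t smin t)\<^sup>2 *\<^sub>R C0 x)"
    and mu_kernel: "(\<lambda>(t, f). mu t f) \<in> measurable borel (subprob_algebra borel)"
    \<comment> \<open>marginal measure mu_t(A) = integral of mu_t^f(A) d nu(f)\<close>
    and mum_sets: "\<And>t. sets (mum t) = sets borel"
    and mum: "\<And>t A. A \<in> sets borel \<Longrightarrow> emeasure (mum t) A = (\<integral>\<^sup>+ f. emeasure (mu t f) A \<partial>\<nu>)"
    \<comment> \<open>rho_t^f = d mu_t^f / d mu_t (absolute continuity)\<close>
    and rho_nonneg: "\<And>t f g. 0 \<le> rho t f g"
    and rho_meas: "(\<lambda>(t, f, g). rho t f g) \<in> borel_measurable borel"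
    and rho_dens: "AE f in \<nu>. \<forall>t\<in>{0..1}. mu t f = density (mum t) (\<lambda>g. ennreal (rho t f g))"
    \<comment> \<open>marginal flow: d/dt phi_t(g) = u_t(phi_t(g)), phi_0 = Id, phi_t invertible\<close>
    and phi0: "\<And>g. phi 0 g = g"
    and phi_ode: "\<And>g t. t \<in> {0..1} \<Longrightarrow>
        ((\<lambda>s. phi s g) has_vector_derivative marginal_velocity \<nu> rho smin t (phi t g)) (at t within {0..1})"
    and phi_bij: "\<And>t. t \<in> {0..1} \<Longrightarrow> bij (phi t)"
    \<comment> \<open>(Frechet) differentiability of (t,g) |-> ubar_{t->r}(g): partial derivatives ubdt (in t) and Dub (in g)\<close>
    and ubar_deriv: "\<And>t r g. 0 < t \<Longrightarrow> t < r \<Longrightarrow> r < 1 \<Longrightarrow>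
        ((\<lambda>(s, x). mean_velocity phi s r x) has_derivative
           (\<lambda>(a, v). a *\<^sub>R ubdt t r g + Dub t r g v)) (at (t, g))"
    \<comment> \<open>distribution of (t, r) on {0 < t < r < 1}\<close>
    and T: "prob_space T" "sets T = sets borel"
    and T_supp: "AE (t, r) in T. 0 < t \<and> t < r \<and> r < 1"
    \<comment> \<open>measurability of the quantities inside the norms\<close>
    and meas_ubar: "(\<lambda>((t, r), g). mean_velocity phi t r g) \<in> borel_measurable borel"
    and meas_ubth: "\<And>\<theta>. (\<lambda>((t, r), g). ubth \<theta> t r g) \<in> borel_measurable borel"
    and meas_D: "(\<lambda>((t, r), f, g). ubdt t r g + Dub t r g (cond_velocity smin t f g)) \<in> borel_measurable borel"
    \<comment> \<open>square integrability of the quantities inside the norms\<close>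
    and L2_ubar: "(\<integral>\<^sup>+ (t, r). (\<integral>\<^sup>+ g. ennreal ((norm (mean_velocity phi t r g))\<^sup>2) \<partial>mum t) \<partial>T) < \<infinity>"
    and L2_ubth: "\<And>\<theta>. (\<integral>\<^sup>+ (t, r). (\<integral>\<^sup>+ g. ennreal ((norm (ubth \<theta> t r g))\<^sup>2) \<partial>mum t) \<partial>T) < \<infinity>"
    and L2_ubth_c: "\<And>\<theta>. (\<integral>\<^sup>+ (t, r). (\<integral>\<^sup>+ f. (\<integral>\<^sup>+ g. ennreal ((norm (ubth \<theta> t r g))\<^sup>2) \<partial>mu t f) \<partial>\<nu>) \<partial>T) < \<infinity>"
    and L2_D: "(\<integral>\<^sup>+ (t, r). (\<integral>\<^sup>+ f. (\<integral>\<^sup>+ g.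
        ennreal ((norm (ubdt t r g + Dub t r g (cond_velocity smin t f g)))\<^sup>2) \<partial>mu t f) \<partial>\<nu>) \<partial>T) < \<infinity>"
    and L2_uf: "(\<integral>\<^sup>+ (t, r). (\<integral>\<^sup>+ f. (\<integral>\<^sup>+ g.
        ennreal ((norm (cond_velocity smin t f g))\<^sup>2) \<partial>mu t f) \<partial>\<nu>) \<partial>T) < \<infinity>"
  shows "\<exists>C::real. \<forall>\<theta>.
      (\<integral>(t, r). (\<integral>f. (\<integral>g.
          (norm ((r - t) *\<^sub>R (ubdt t r g + Dub t r g (cond_velocity smin t f g))
                 + cond_velocity smin t f g - ubth \<theta> t r g))\<^sup>2 \<partial>mu t f) \<partial>\<nu>) \<partial>T)
    = (\<integral>(t, r). (\<integral>g. (norm (mean_velocity phi t r g - ubth \<theta> t r g))\<^sup>2 \<partial>mum t) \<partial>T) + C"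
proof -
  have "prob_space (mu t f)" "sets (mu t f) = sets borel" for t f
    using mu_gauss[of t f] by (simp_all add: gaussian_measure_def)
  then interpret meanflow_model smin \<nu> mu mum rho phi ubdt Dub T
    by (intro meanflow_model.intro nu mu_kernel mum_sets mum rho_nonneg rho_meas rho_dens
        phi_ode phi_bij ubar_deriv T T_supp meas_ubar meas_D L2_ubar L2_D L2_uf)
  show ?thesis
  proof (rule ex_integral_eq_plus_const[where c = "\<lambda>(t, r).
      (\<integral>f. \<integral>g. (norm (cond_target t r f g))\<^sup>2 \<partial>mu t f \<partial>\<nu>) - (\<integral>g. (norm (mean_velocity phi t r g))\<^sup>2 \<partial>mum t)"])
    fix \<theta>
    show "integrable T (\<lambda>(t, r). \<integral>f. \<integral>g. (norm (cond_target t r f g - ubth \<theta> t r g))\<^sup>2 \<partial>mu t f \<partial>\<nu>)"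
      by (rule integrable_cond_target_loss[OF meas_ubth L2_ubth_c])
    show "integrable T (\<lambda>(t, r). \<integral>g. (norm (mean_velocity phi t r g - ubth \<theta> t r g))\<^sup>2 \<partial>mum t)"
      by (rule integrable_mean_velocity_loss[OF meas_ubth L2_ubth])
    show "AE x in T. (\<lambda>(t, r). \<integral>f. \<integral>g. (norm (cond_target t r f g - ubth \<theta> t r g))\<^sup>2 \<partial>mu t f \<partial>\<nu>) x
        = (\<lambda>(t, r). \<integral>g. (norm (mean_velocity phi t r g - ubth \<theta> t r g))\<^sup>2 \<partial>mum t) x
          + (\<lambda>(t, r). (\<integral>f. \<integral>g. (norm (cond_target t r f g))\<^sup>2 \<partial>mu t f \<partial>\<nu>)
                       - (\<integral>g. (norm (mean_velocity phi t r g))\<^sup>2 \<partial>mum t)) x"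
      using AE_loss_identity[OF meas_ubth L2_ubth] by (simp add: split_beta')
  qed
qed

end
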